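(* Let $G$ be a torsion abelian group (with the discrete topology), let $\widehat G$ be its Pontryagin dual (a totally disconnected, i.e. $0$-dimensional, compact abelian group), and let $\varphi\colon G\to G$ be an endomorphism with dual endomorphism $\widehat\varphi\colon\widehat G\to\widehat G$, $\widehat\varphi(\chi)=\chi\circ\varphi$. Then $\varphi$ is (algebraically) positively expansive if and only if $\widehat\varphi$ is topologically positively expansive. Moreover, if $\varphi$ is an automorphism, then $\varphi$ is (algebraically) expansive if and only if $\widehat\varphi$ is topologically expansive.
   Context: All groups are abelian; $\mathbb N=\{0,1,2,\dots\}$. An endomorphism $\varphi\colon G\to G$ is (algebraically) positively expansive if there is a finite subgroup $S\leq G$ such that for every finite subgroup $F\leq G$ there is $n\in\mathbb N$ with $F\subseteq\sum_{k=0}^n\varphi^kS$. An automorphism $\varphi$ is (algebraically) expansive if there is a finite subgroup $S\leq G$ such that for every finite subgroup $F\leq G$ there is $n\in\mathbb N$ with $F\subseteq\sum_{|k|\leq n}\varphi^kS$. A continuous endomorphism $\psi$ of a compact group $K$ with identity $e$ is topologically positively expansive if there is a neighborhood $U$ of $e$ with $\bigcap_{k\in\mathbb N}\psi^{-k}(U)=\{e\}$; a continuous automorphism $\psi$ is topologically expansive if there is a neighborhood $U$ of $e$ with $\bigcap_{k\in\mathbb Z}\psi^{-k}(U)=\{e\}$. *)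

theory Defs
  imports "HOL-Analysis.Analysis"
begin

definition is_torsion_group :: "'a::ab_group_add itself \<Rightarrow> bool" where
  "is_torsion_group _ \<longleftrightarrow> (\<forall>x::'a. \<exists>n::nat. n > 0 \<and> (\<Sum>i<n. x) = 0)"

definition is_endo :: "('a::ab_group_add \<Rightarrow> 'a) \<Rightarrow> bool" where
  "is_endo \<phi> \<longleftrightarrow> (\<forall>x y. \<phi> (x + y) = \<phi> x + \<phi> y)"

definition is_subgroup :: "'a::ab_group_add set \<Rightarrow> bool" where
  "is_subgroup S \<longleftrightarrow> 0 \<in> S \<and> (\<forall>x\<in>S. \<forall>y\<in>S. x + y \<in> S) \<and> (\<forall>x\<in>S. - x \<in> S)"

definition pos_trajectory :: "('a::ab_group_add \<Rightarrow> 'a) \<Rightarrow> 'a set \<Rightarrow> nat \<Rightarrow> 'a set" where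
  "pos_trajectory \<phi> S n =
     {(\<Sum>k\<le>n. x k) | x. \<forall>k\<le>n. x k \<in> (\<phi> ^^ k) ` S}"

definition full_trajectory :: "('a::ab_group_add \<Rightarrow> 'a) \<Rightarrow> 'a set \<Rightarrow> nat \<Rightarrow> 'a set" where
  "full_trajectory \<phi> S n =
     {(\<Sum>k\<le>n. x k) + (\<Sum>k\<le>n. y k) | x y.
        \<forall>k\<le>n. x k \<in> (\<phi> ^^ k) ` S \<and> y k \<in> (inv \<phi> ^^ k) ` S}"

definition alg_pos_expansive :: "('a::ab_group_add \<Rightarrow> 'a) \<Rightarrow> bool" where
  "alg_pos_expansive \<phi> \<longleftrightarrow>
     (\<exists>S. finite S \<and> is_subgroup S \<and>
        (\<forall>F. finite F \<and> is_subgroup F \<longrightarrow> (\<exists>n. F \<subseteq> pos_trajectory \<phi> S n)))"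

definition alg_expansive :: "('a::ab_group_add \<Rightarrow> 'a) \<Rightarrow> bool" where
  "alg_expansive \<phi> \<longleftrightarrow>
     (\<exists>S. finite S \<and> is_subgroup S \<and>
        (\<forall>F. finite F \<and> is_subgroup F \<longrightarrow> (\<exists>n. F \<subseteq> full_trajectory \<phi> S n)))"

text \<open>Pontryagin dual: continuous homomorphisms from the discrete group into the circle
  group (unit complex numbers), with the compact-open topology, which for a discrete group
  is the topology of pointwise convergence, i.e. the subspace topology of the product topology.\<close>

definition characters :: "('a::ab_group_add \<Rightarrow> complex) set" where
  "characters = {c. (\<forall>x y. c (x + y) = c x * c y) \<and> (\<forall>x. cmod (c x) = 1)}"

definition dual_top :: "('a::ab_group_add \<Rightarrow> complex) topology" where
  "dual_top = top_of_set characters"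

definition trivial_char :: "'a \<Rightarrow> complex" where
  "trivial_char = (\<lambda>_. 1)"

definition dual_map :: "('a::ab_group_add \<Rightarrow> 'a) \<Rightarrow> ('a \<Rightarrow> complex) \<Rightarrow> ('a \<Rightarrow> complex)" where
  "dual_map \<phi> c = c \<circ> \<phi>"

definition top_pos_expansive :: "'b topology \<Rightarrow> 'b \<Rightarrow> ('b \<Rightarrow> 'b) \<Rightarrow> bool" where
  "top_pos_expansive X e \<psi> \<longleftrightarrow>
     (\<exists>U. U \<subseteq> topspace X \<and> (\<exists>V. openin X V \<and> e \<in> V \<and> V \<subseteq> U) \<and>
        {x \<in> topspace X. \<forall>k::nat. (\<psi> ^^ k) x \<in> U} = {e})"

definition top_expansive :: "'b topology \<Rightarrow> 'b \<Rightarrow> ('b \<Rightarrow> 'b) \<Rightarrow> bool" where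
  "top_expansive X e \<psi> \<longleftrightarrow>
     (\<exists>U. U \<subseteq> topspace X \<and> (\<exists>V. openin X V \<and> e \<in> V \<and> V \<subseteq> U) \<and>
        {x \<in> topspace X. \<forall>k::nat. (\<psi> ^^ k) x \<in> U \<and> (inv_into (topspace X) \<psi> ^^ k) x \<in> U} = {e})"

end

theory Submission
  imports Defs "HOL-Library.Set_Algebras"
begin

(* Fix a finite subgroup S and let T be the union of its trajectory subgroups.  Since every
   finite subset of a torsion group lies in a finite subgroup, S witnesses algebraic (positive)
   expansiveness iff T is the whole group.  On the dual side, the annihilators of finite
   subgroups form a neighbourhood base of the trivial character, and a character whose real
   part is positive on a finite subgroup is trivial there; so topological expansiveness means
   that for some finite S the only character trivial on every \<phi>^k S is the trivial one, i.e.
   the annihilator of T is trivial.  Finally, characters of a torsion group separate points from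
   subgroups (extend them one cyclic step at a time, using that the circle group is divisible,
   and conclude with Zorn's lemma), so a subgroup with trivial annihilator is everything. *)

section \<open>Multiples in torsion groups\<close>

primrec nsmul :: "nat \<Rightarrow> 'a::ab_group_add \<Rightarrow> 'a" where
  "nsmul 0 x = 0"
| "nsmul (Suc n) x = x + nsmul n x"

lemma sum_lessThan_const_eq_nsmul: "(\<Sum>i<n. x) = nsmul n x"
  by (induction n) (auto simp: add.commute)

lemma nsmul_add: "nsmul (a + b) x = nsmul a x + nsmul b x"
  by (induction a) (auto simp: add.assoc)

lemma nsmul_mult: "nsmul (a * b) x = nsmul a (nsmul b x)"
  by (induction a) (auto simp: nsmul_add)

lemma nsmul_zero [simp]: "nsmul a (0::'a::ab_group_add) = 0"
  by (induction a) auto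

lemma nsmul_uminus: "nsmul a (- x) = - nsmul a x"
  by (induction a) (auto simp: add.commute)

lemma torsion_nsmul_eq_0:
  assumes "is_torsion_group TYPE('a::ab_group_add)"
  obtains n where "n > 0" "nsmul n (x::'a) = 0"
  using assms unfolding is_torsion_group_def sum_lessThan_const_eq_nsmul by blast

lemma nsmul_mod:
  assumes "nsmul n x = 0"
  shows "nsmul (j mod n) x = nsmul j x"
proof -
  have "nsmul j x = nsmul (j mod n + j div n * n) x"
    by simp
  also have "\<dots> = nsmul (j mod n) x"
    by (simp only: nsmul_add nsmul_mult assms nsmul_zero add_0_right)
  finally show ?thesis
    by simp
qed

lemma nsmul_diff_1_eq_uminus:
  assumes "nsmul n x = 0" "n > 0"
  shows "nsmul (n - 1) x = - x"
proof -
  have "x + nsmul (n - 1) x = 0"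
    using assms by (cases n) simp_all
  then show ?thesis
    by (simp add: eq_neg_iff_add_eq_0 add.commute)
qed

lemma finite_range_nsmul:
  assumes "is_torsion_group TYPE('a::ab_group_add)"
  shows "finite (range (\<lambda>j. nsmul j (x::'a)))"
proof -
  obtain n where "n > 0" "nsmul n x = 0"
    using torsion_nsmul_eq_0 [OF assms] .
  then have "nsmul j x \<in> (\<lambda>j. nsmul j x) ` {..<n}" for j
    by (intro image_eqI [of _ _ "j mod n"]) (simp_all add: nsmul_mod)
  then have "range (\<lambda>j. nsmul j x) \<subseteq> (\<lambda>j. nsmul j x) ` {..<n}"
    by blast
  then show ?thesis
    by (rule finite_subset) simp
qed

lemma is_subgroup_range_nsmul:
  assumes "is_torsion_group TYPE('a::ab_group_add)"
  shows "is_subgroup (range (\<lambda>j. nsmul j (x::'a)))"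
  unfolding is_subgroup_def
proof (intro conjI ballI)
  show "0 \<in> range (\<lambda>j. nsmul j x)"
    using rangeI [of "\<lambda>j. nsmul j x" 0] by simp
  show "a + b \<in> range (\<lambda>j. nsmul j x)"
    if ab: "a \<in> range (\<lambda>j. nsmul j x)" "b \<in> range (\<lambda>j. nsmul j x)" for a b
  proof -
    obtain i j where "a = nsmul i x" "b = nsmul j x"
      using ab by blast
    then show ?thesis
      using rangeI [of "\<lambda>j. nsmul j x" "i + j"] by (simp add: nsmul_add)
  qed
  obtain n where "n > 0" "nsmul n x = 0"
    using torsion_nsmul_eq_0 [OF assms] .
  then have "- nsmul j x = nsmul (j * (n - 1)) x" for j
    by (simp only: nsmul_mult nsmul_diff_1_eq_uminus nsmul_uminus)
  then show "- a \<in> range (\<lambda>j. nsmul j x)" if "a \<in> range (\<lambda>j. nsmul j x)" for a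
    using that by auto
qed

lemma is_subgroup_set_plus:
  assumes "is_subgroup A" "is_subgroup B"
  shows "is_subgroup (A + B)"
  unfolding is_subgroup_def
proof (intro conjI ballI)
  show "0 \<in> A + B"
    using assms set_plus_intro [of 0 A 0 B] by (simp add: is_subgroup_def)
next
  fix x y assume "x \<in> A + B" "y \<in> A + B"
  then obtain a b a' b' where "a \<in> A" "b \<in> B" "a' \<in> A" "b' \<in> B" "x = a + b" "y = a' + b'"
    by (auto elim!: set_plus_elim)
  then have "(a + a') + (b + b') \<in> A + B"
    using assms by (auto simp: is_subgroup_def)
  then show "x + y \<in> A + B"
    by (simp add: \<open>x = a + b\<close> \<open>y = a' + b'\<close> algebra_simps)
next
  fix x assume "x \<in> A + B"
  then obtain a b where "a \<in> A" "b \<in> B" "x = a + b"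
    by (auto elim!: set_plus_elim)
  then have "- a + - b \<in> A + B"
    using assms by (intro set_plus_intro) (auto simp: is_subgroup_def)
  then show "- x \<in> A + B"
    by (simp add: \<open>x = a + b\<close> add.commute)
qed

lemma finite_subgroup_superset:
  assumes tor: "is_torsion_group TYPE('a::ab_group_add)" and "finite (X::'a set)"
  obtains S where "finite S" "is_subgroup S" "X \<subseteq> S"
  using assms(2)
proof (induction X arbitrary: thesis rule: finite_induct)
  case empty
  show ?case
    by (rule empty.prems [of "{0}"]) (auto simp: is_subgroup_def)
next
  case (insert x X)
  obtain S where S: "finite S" "is_subgroup S" "X \<subseteq> S"
    using insert.IH .
  let ?S' = "range (\<lambda>j. nsmul j x) + S"
  have "0 \<in> range (\<lambda>j. nsmul j x)"
    using rangeI [of "\<lambda>j. nsmul j x" 0] by simp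
  then have "S \<subseteq> ?S'"
    by (rule set_zero_plus2)
  with S(3) have "X \<subseteq> ?S'"
    by (rule subset_trans)
  moreover have "x \<in> ?S'"
  proof -
    have "nsmul 1 x \<in> range (\<lambda>j. nsmul j x)" "0 \<in> S"
      using S(2) unfolding is_subgroup_def by blast+
    then have "nsmul 1 x + 0 \<in> ?S'"
      by (rule set_plus_intro)
    then show ?thesis
      by simp
  qed
  moreover have "finite ?S'"
    using S(1) finite_range_nsmul [OF tor] by (rule finite_set_plus [rotated])
  moreover have "is_subgroup ?S'"
    using is_subgroup_range_nsmul [OF tor] S(2) by (rule is_subgroup_set_plus)
  ultimately show ?case
    by (intro insert.prems [of ?S']) simp_all
qed

section \<open>Characters\<close>

lemma char_add: "c \<in> characters \<Longrightarrow> c (x + y) = c x * c y"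
  unfolding characters_def by blast

lemma trivial_char_in_characters: "trivial_char \<in> characters"
  unfolding trivial_char_def characters_def by simp

lemma char_comp_endo: "c \<in> characters \<Longrightarrow> is_endo f \<Longrightarrow> c \<circ> f \<in> characters"
  unfolding characters_def is_endo_def by auto

(* If c t \<noteq> 1 for some t in S, translating by t gives sum c S = c t * sum c S, so the sum
   vanishes; but its real part is positive. *)
lemma char_eq_1_if_Re_pos:
  assumes c: "c \<in> characters" and S: "finite S" "is_subgroup S"
    and pos: "\<forall>s\<in>S. 0 < Re (c s)"
  shows "\<forall>s\<in>S. c s = 1"
proof (rule ccontr)
  assume "\<not> (\<forall>s\<in>S. c s = 1)"
  then obtain t where t: "t \<in> S" "c t \<noteq> 1"
    by blast
  have "(+) t ` S = S"
  proof
    show "(+) t ` S \<subseteq> S"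
      using S(2) t(1) unfolding is_subgroup_def by auto
    show "S \<subseteq> (+) t ` S"
    proof
      fix y assume "y \<in> S"
      then have "- t + y \<in> S"
        using S(2) t(1) unfolding is_subgroup_def by blast
      then show "y \<in> (+) t ` S"
        by (rule image_eqI [rotated]) simp
    qed
  qed
  then have "sum c S = (\<Sum>s\<in>S. c (t + s))"
    using sum.reindex [of "(+) t" S c] by (simp add: inj_on_def)
  also have "\<dots> = c t * sum c S"
    by (simp add: char_add [OF c] sum_distrib_left)
  finally have "(1 - c t) * sum c S = 0"
    by (simp add: algebra_simps)
  then have "sum c S = 0"
    using t(2) by simp
  moreover have "0 < (\<Sum>s\<in>S. Re (c s))"
    using S pos unfolding is_subgroup_def by (intro sum_pos) auto
  ultimately show False
    by (simp add: Re_sum [symmetric])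
qed

section \<open>Extending characters\<close>

(* A character of the subgroup Domain R, given by its graph R, so that Zorn's lemma can be
   applied to the inclusion order. *)
definition partial_char :: "('a::ab_group_add \<times> complex) set \<Rightarrow> bool" where
  "partial_char R \<longleftrightarrow> single_valued R \<and> (0, 1) \<in> R \<and>
     (\<forall>x a y b. (x, a) \<in> R \<longrightarrow> (y, b) \<in> R \<longrightarrow> (x + y, a * b) \<in> R) \<and>
     (\<forall>x a. (x, a) \<in> R \<longrightarrow> cmod a = 1)"

lemma partial_char_unique: "partial_char R \<Longrightarrow> (x, a) \<in> R \<Longrightarrow> (x, b) \<in> R \<Longrightarrow> a = b"
  unfolding partial_char_def single_valued_def by blast

lemma partial_char_zero: "partial_char R \<Longrightarrow> (0, 1) \<in> R"
  unfolding partial_char_def by blast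

lemma partial_char_add: "partial_char R \<Longrightarrow> (x, a) \<in> R \<Longrightarrow> (y, b) \<in> R \<Longrightarrow> (x + y, a * b) \<in> R"
  unfolding partial_char_def by blast

lemma partial_char_norm: "partial_char R \<Longrightarrow> (x, a) \<in> R \<Longrightarrow> cmod a = 1"
  unfolding partial_char_def by blast

lemma partial_char_nsmul: "partial_char R \<Longrightarrow> (x, a) \<in> R \<Longrightarrow> (nsmul j x, a ^ j) \<in> R"
  by (induction j) (auto intro: partial_char_add partial_char_zero)

lemma is_subgroup_Domain_partial_char:
  assumes tor: "is_torsion_group TYPE('a::ab_group_add)" and R: "partial_char (R :: ('a \<times> complex) set)"
  shows "is_subgroup (Domain R)"
  unfolding is_subgroup_def
proof (intro conjI ballI)
  show "0 \<in> Domain R"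
    using partial_char_zero [OF R] by blast
  show "x + y \<in> Domain R" if "x \<in> Domain R" "y \<in> Domain R" for x y
    using that partial_char_add [OF R] by blast
  show "- x \<in> Domain R" if x: "x \<in> Domain R" for x
  proof -
    obtain a where a: "(x, a) \<in> R"
      using x by blast
    obtain n where n: "n > 0" "nsmul n x = 0"
      using torsion_nsmul_eq_0 [OF tor] .
    have "(nsmul (n - 1) x, a ^ (n - 1)) \<in> R"
      using partial_char_nsmul [OF R a] .
    then have "(- x, a ^ (n - 1)) \<in> R"
      using nsmul_diff_1_eq_uminus [OF n(2,1)] by simp
    then show ?thesis
      by blast
  qed
qed

lemma obtain_least_nsmul_mem:
  assumes tor: "is_torsion_group TYPE('a::ab_group_add)" and "0 \<in> D"
  obtains m where "m > 0" "nsmul m (h::'a) \<in> D" "\<forall>r. 0 < r \<longrightarrow> r < m \<longrightarrow> nsmul r h \<notin> D"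
proof -
  obtain n where "n > 0" "nsmul n h = 0"
    using torsion_nsmul_eq_0 [OF tor] .
  then have "\<exists>m. 0 < m \<and> nsmul m h \<in> D"
    using assms(2) by auto
  then have "0 < (LEAST m. 0 < m \<and> nsmul m h \<in> D) \<and> nsmul (LEAST m. 0 < m \<and> nsmul m h \<in> D) h \<in> D"
    by (rule LeastI_ex)
  moreover have "\<forall>r. 0 < r \<longrightarrow> r < (LEAST m. 0 < m \<and> nsmul m h \<in> D) \<longrightarrow> nsmul r h \<notin> D"
    using not_less_Least by blast
  ultimately show ?thesis
    using that by blast
qed

definition adjoin :: "('a::ab_group_add \<times> complex) set \<Rightarrow> 'a \<Rightarrow> complex \<Rightarrow> ('a \<times> complex) set" where
  "adjoin R h z = {(k + nsmul j h, a * z ^ j) | k a j. (k, a) \<in> R}"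

lemma subset_adjoin: "R \<subseteq> adjoin R h z"
proof clarify
  fix k a assume "(k, a) \<in> R"
  moreover have "(k, a) = (k + nsmul 0 h, a * z ^ 0)"
    by simp
  ultimately show "(k, a) \<in> adjoin R h z"
    unfolding adjoin_def by blast
qed

lemma zero_mem_adjoin: "(0, 1) \<in> R \<Longrightarrow> (0, 1) \<in> adjoin R h z"
  using subset_adjoin by blast

lemma mem_adjoin: "(0, 1) \<in> R \<Longrightarrow> (h, z) \<in> adjoin R h z"
proof -
  assume "(0, 1) \<in> R"
  moreover have "(h, z) = (0 + nsmul 1 h, 1 * z ^ 1)"
    by simp
  ultimately show ?thesis
    unfolding adjoin_def by blast
qed

context
  fixes R :: "('a::ab_group_add \<times> complex) set" and h :: 'a and m :: nat
  assumes tor: "is_torsion_group TYPE('a)" and R: "partial_char R"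
    and m_pos: "m > 0" and m_mem: "nsmul m h \<in> Domain R"
    and m_least: "\<forall>r. 0 < r \<longrightarrow> r < m \<longrightarrow> nsmul r h \<notin> Domain R"
begin

lemma least_nsmul_dvd:
  assumes "nsmul d h \<in> Domain R"
  shows "m dvd d"
proof -
  have "nsmul d h = nsmul (d mod m + d div m * m) h"
    by simp
  also have "\<dots> = nsmul (d mod m) h + nsmul (d div m) (nsmul m h)"
    by (simp only: nsmul_add nsmul_mult)
  finally have decomp: "nsmul (d mod m) h = nsmul d h + - nsmul (d div m) (nsmul m h)"
    by simp
  have "nsmul (d div m) (nsmul m h) \<in> Domain R"
    using m_mem partial_char_nsmul [OF R] by blast
  then have "nsmul d h + - nsmul (d div m) (nsmul m h) \<in> Domain R"
    using assms is_subgroup_Domain_partial_char [OF tor R] unfolding is_subgroup_def by blast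
  then have "nsmul (d mod m) h \<in> Domain R"
    unfolding decomp .
  then have "d mod m = 0"
    using m_least m_pos by (meson mod_less_divisor neq0_conv)
  then show ?thesis
    by (rule mod_0_imp_dvd)
qed

lemma extension_well_defined:
  assumes w: "(nsmul m h, w) \<in> R" and z: "z ^ m = w"
    and k: "(k, a) \<in> R" "(k', a') \<in> R"
    and eq: "k + nsmul j h = k' + nsmul j' h" and "j \<le> j'"
  shows "a * z ^ j = a' * z ^ j'"
proof -
  define d where "d = j' - j"
  have j': "j' = d + j"
    using \<open>j \<le> j'\<close> by (simp add: d_def)
  have k_eq: "k = k' + nsmul d h"
    using eq by (simp add: j' nsmul_add algebra_simps)
  have "k + - k' \<in> Domain R"
    using k is_subgroup_Domain_partial_char [OF tor R] unfolding is_subgroup_def by blast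
  then have "nsmul d h \<in> Domain R"
    using k_eq by simp
  then obtain q where "d = m * q"
    using least_nsmul_dvd by (blast elim: dvdE)
  then have q: "d = q * m"
    by (simp add: mult.commute)
  have "(k' + nsmul d h, a' * w ^ q) \<in> R"
    unfolding q nsmul_mult using partial_char_add [OF R k(2) partial_char_nsmul [OF R w]] .
  then have "a = a' * w ^ q"
    using partial_char_unique [OF R k(1)] k_eq by simp
  then show ?thesis
    by (simp add: j' q z [symmetric] power_add mult.commute [of q m] power_mult mult.assoc)
qed

lemma partial_char_adjoin:
  assumes w: "(nsmul m h, w) \<in> R" and z: "z ^ m = w"
  shows "partial_char (adjoin R h z)"
  unfolding partial_char_def single_valued_def
proof (intro conjI allI impI)
  fix x a b assume "(x, a) \<in> adjoin R h z" "(x, b) \<in> adjoin R h z"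
  then obtain k1 a1 j1 k2 a2 j2 where
    1: "(k1, a1) \<in> R" "x = k1 + nsmul j1 h" "a = a1 * z ^ j1" and
    2: "(k2, a2) \<in> R" "x = k2 + nsmul j2 h" "b = a2 * z ^ j2"
    unfolding adjoin_def by blast
  show "a = b"
  proof (cases "j1 \<le> j2")
    case True
    then show ?thesis
      using extension_well_defined [OF w z 1(1) 2(1)] 1 2 by simp
  next
    case False
    then show ?thesis
      using extension_well_defined [OF w z 2(1) 1(1)] 1 2 by simp
  qed
next
  show "(0, 1) \<in> adjoin R h z"
    using zero_mem_adjoin [OF partial_char_zero [OF R]] .
next
  fix x a y b assume "(x, a) \<in> adjoin R h z" "(y, b) \<in> adjoin R h z"
  then obtain k1 a1 j1 k2 a2 j2 where
    1: "(k1, a1) \<in> R" "x = k1 + nsmul j1 h" "a = a1 * z ^ j1" and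
    2: "(k2, a2) \<in> R" "y = k2 + nsmul j2 h" "b = a2 * z ^ j2"
    unfolding adjoin_def by blast
  have "x + y = (k1 + k2) + nsmul (j1 + j2) h" "a * b = (a1 * a2) * z ^ (j1 + j2)"
    using 1 2 by (simp_all add: nsmul_add power_add algebra_simps)
  then show "(x + y, a * b) \<in> adjoin R h z"
    unfolding adjoin_def using partial_char_add [OF R 1(1) 2(1)] by blast
next
  have "cmod z ^ m = 1 ^ m"
    using partial_char_norm [OF R w] z by (simp add: norm_power [symmetric])
  then have "cmod z = 1"
    using norm_ge_zero zero_le_one m_pos by (rule power_eq_imp_eq_base)
  then show "cmod a = 1" if "(x, a) \<in> adjoin R h z" for x a
    using that partial_char_norm [OF R] unfolding adjoin_def by (auto simp: norm_mult norm_power)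
qed

end

lemma partial_char_Union_chain:
  assumes "C \<noteq> {}" and R: "\<And>R. R \<in> C \<Longrightarrow> partial_char R"
    and chain: "\<And>R R'. R \<in> C \<Longrightarrow> R' \<in> C \<Longrightarrow> R \<subseteq> R' \<or> R' \<subseteq> R"
  shows "partial_char (\<Union>C)"
proof -
  have common: "\<exists>R\<in>C. p \<in> R \<and> q \<in> R" if "p \<in> \<Union>C" "q \<in> \<Union>C" for p q
    using that chain by blast
  show ?thesis
    unfolding partial_char_def single_valued_def
  proof (intro conjI allI impI)
    show "a = b" if "(x, a) \<in> \<Union>C" "(x, b) \<in> \<Union>C" for x a b
      using common [OF that] R partial_char_unique by blast
    show "(0, 1) \<in> \<Union>C"
      using \<open>C \<noteq> {}\<close> R partial_char_zero by blast
    show "(x + y, a * b) \<in> \<Union>C" if "(x, a) \<in> \<Union>C" "(y, b) \<in> \<Union>C" for x a y b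
      using common [OF that] R partial_char_add by blast
    show "cmod a = 1" if "(x, a) \<in> \<Union>C" for x a
      using that R partial_char_norm by blast
  qed
qed

lemma maximal_partial_char_total:
  assumes tor: "is_torsion_group TYPE('a::ab_group_add)" and M: "partial_char (M :: ('a \<times> complex) set)"
    and maximal: "\<And>R. partial_char R \<Longrightarrow> M \<subseteq> R \<Longrightarrow> R = M"
  shows "Domain M = UNIV"
proof (rule ccontr)
  assume "Domain M \<noteq> UNIV"
  then obtain h where h: "h \<notin> Domain M"
    by blast
  have "0 \<in> Domain M"
    using partial_char_zero [OF M] by blast
  then obtain m where m: "m > 0" "nsmul m h \<in> Domain M" "\<forall>r. 0 < r \<longrightarrow> r < m \<longrightarrow> nsmul r h \<notin> Domain M"
    by (rule obtain_least_nsmul_mem [OF tor])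
  then obtain w where w: "(nsmul m h, w) \<in> M"
    by blast
  obtain z where "w = z ^ m"
    using exists_complex_root [of m w] m(1) by blast
  then have "partial_char (adjoin M h z)"
    using partial_char_adjoin [OF tor M m w] by simp
  then have "adjoin M h z = M"
    using maximal subset_adjoin by blast
  then show False
    using mem_adjoin [OF partial_char_zero [OF M]] h by blast
qed

lemma total_partial_char_is_graph:
  assumes M: "partial_char M" and total: "Domain M = UNIV"
  shows "\<exists>c\<in>characters. \<forall>x. (x, c x) \<in> M"
proof -
  define c where "c x = (THE a. (x, a) \<in> M)" for x
  have graph: "(x, c x) \<in> M" for x
  proof -
    obtain a where a: "(x, a) \<in> M"
      using total by blast
    then have "c x = a"
      unfolding c_def using partial_char_unique [OF M] by blast
    then show ?thesis
      using a by simp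
  qed
  have "c \<in> characters"
    unfolding characters_def
    using partial_char_unique [OF M graph partial_char_add [OF M graph graph]]
      partial_char_norm [OF M graph] by blast
  then show ?thesis
    using graph by blast
qed

lemma partial_char_extends_to_char:
  assumes tor: "is_torsion_group TYPE('a::ab_group_add)" and R0: "partial_char (R0 :: ('a \<times> complex) set)"
  shows "\<exists>c\<in>characters. \<forall>x a. (x, a) \<in> R0 \<longrightarrow> c x = a"
proof -
  let ?A = "{R. partial_char R \<and> R0 \<subseteq> R}"
  have "\<exists>M\<in>?A. \<forall>R\<in>?A. M \<subseteq> R \<longrightarrow> R = M"
  proof (rule subset_Zorn_nonempty)
    show "?A \<noteq> {}"
      using R0 by blast
    show "\<Union>C \<in> ?A" if C: "C \<noteq> {}" "subset.chain ?A C" for C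
    proof -
      have sub: "C \<subseteq> ?A" and chain: "\<forall>X\<in>C. \<forall>Y\<in>C. X \<subseteq> Y \<or> Y \<subseteq> X"
        using C(2) unfolding subset_chain_def by auto
      have "partial_char (\<Union>C)"
        using C(1) by (rule partial_char_Union_chain) (use sub chain in blast)+
      moreover have "R0 \<subseteq> \<Union>C"
        using C(1) sub by blast
      ultimately show ?thesis
        by blast
    qed
  qed
  then obtain M where "M \<in> ?A" and max: "\<forall>R\<in>?A. M \<subseteq> R \<longrightarrow> R = M" ..
  then have M: "partial_char M" "R0 \<subseteq> M"
    by simp_all
  have "Domain M = UNIV"
    using tor M(1) by (rule maximal_partial_char_total) (use max M(2) in auto)
  then obtain c where "c \<in> characters" and graph: "\<forall>x. (x, c x) \<in> M"
    using total_partial_char_is_graph [OF M(1)] by blast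
  moreover have "\<forall>x a. (x, a) \<in> R0 \<longrightarrow> c x = a"
    using M(2) graph partial_char_unique [OF M(1)] by blast
  ultimately show ?thesis
    by blast
qed

lemma char_separating_point:
  assumes tor: "is_torsion_group TYPE('a::ab_group_add)"
    and T: "is_subgroup T" and g: "(g::'a) \<notin> T"
  obtains c where "c \<in> characters" "\<forall>t\<in>T. c t = 1" "c g \<noteq> 1"
proof -
  have R0: "partial_char (T \<times> {1})"
    using T unfolding partial_char_def single_valued_def is_subgroup_def by auto
  have "0 \<in> T"
    using T unfolding is_subgroup_def by blast
  then obtain m where m: "m > 0" "nsmul m g \<in> T" "\<forall>r. 0 < r \<longrightarrow> r < m \<longrightarrow> nsmul r g \<notin> T"
    by (rule obtain_least_nsmul_mem [OF tor])
  have "m \<noteq> 1"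
    using m(2) g by auto
  define z where "z = exp (2 * of_real pi * \<i> * of_nat 1 / of_nat m)"
  have "z ^ m = 1"
    unfolding z_def using m(1) by (intro complex_root_unity) simp
  have "z \<noteq> 1"
    unfolding z_def using m(1) \<open>m \<noteq> 1\<close> by (subst complex_root_unity_eq_1) auto
  have "Domain (T \<times> {1::complex}) = T"
    by auto
  then have "partial_char (adjoin (T \<times> {1}) g z)"
    using partial_char_adjoin [OF tor R0 m(1), of g 1 z] m(2,3) \<open>z ^ m = 1\<close> by simp
  then obtain c where c: "c \<in> characters"
    and graph: "\<forall>x a. (x, a) \<in> adjoin (T \<times> {1}) g z \<longrightarrow> c x = a"
    using partial_char_extends_to_char [OF tor] by blast
  have "c t = 1" if "t \<in> T" for t
    using graph [rule_format, OF subset_adjoin [THEN subsetD], of t 1] that by simp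
  moreover have "c g = z"
    using graph mem_adjoin [OF partial_char_zero [OF R0]] by blast
  ultimately show ?thesis
    using that c \<open>z \<noteq> 1\<close> by simp
qed

lemma subgroup_eq_UNIV_iff_annihilator_trivial:
  assumes tor: "is_torsion_group TYPE('a::ab_group_add)" and T: "is_subgroup (T::'a set)"
  shows "T = UNIV \<longleftrightarrow> (\<forall>c\<in>characters. (\<forall>t\<in>T. c t = 1) \<longrightarrow> c = trivial_char)"
proof
  show "\<forall>c\<in>characters. (\<forall>t\<in>T. c t = 1) \<longrightarrow> c = trivial_char" if "T = UNIV"
    using that by (auto simp: trivial_char_def)
next
  assume annihilator: "\<forall>c\<in>characters. (\<forall>t\<in>T. c t = 1) \<longrightarrow> c = trivial_char"
  show "T = UNIV"
  proof (rule ccontr)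
    assume "T \<noteq> UNIV"
    then obtain g where "g \<notin> T"
      by blast
    then obtain c where "c \<in> characters" "\<forall>t\<in>T. c t = 1" "c g \<noteq> 1"
      using char_separating_point [OF tor T] by blast
    then show False
      using annihilator by (auto simp: trivial_char_def)
  qed
qed

section \<open>The dual topology\<close>

lemma topspace_dual_top [simp]: "topspace dual_top = characters"
  unfolding dual_top_def by simp

lemma openin_dual_top_Re_pos:
  assumes "finite S"
  shows "openin dual_top {c \<in> characters. \<forall>s\<in>S. 0 < Re (c s)}"
proof -
  have "open {f::'a \<Rightarrow> complex. \<forall>s\<in>S. f ((\<lambda>s. s) s) \<in> {z. 0 < Re z}}"
    by (rule product_topology_basis') (auto simp: assms open_halfspace_Re_gt)
  then have "openin dual_top (characters \<inter> {f. \<forall>s\<in>S. f s \<in> {z. 0 < Re z}})"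
    unfolding dual_top_def by (intro openin_open_Int) simp
  moreover have "characters \<inter> {f. \<forall>s\<in>S. f s \<in> {z. 0 < Re z}} = {c \<in> characters. \<forall>s\<in>S. 0 < Re (c s)}"
    by auto
  ultimately show ?thesis
    by simp
qed

lemma nbhd_contains_annihilator:
  fixes V :: "('a::ab_group_add \<Rightarrow> complex) set"
  assumes tor: "is_torsion_group TYPE('a)" and V: "openin dual_top V" "trivial_char \<in> V"
  shows "\<exists>S. finite S \<and> is_subgroup S \<and> (\<forall>c\<in>characters. (\<forall>s\<in>S. c s = 1) \<longrightarrow> c \<in> V)"
proof -
  obtain W where W: "open W" "V = characters \<inter> W"
    using V(1) unfolding dual_top_def openin_open by blast
  then have "trivial_char \<in> W"
    using V(2) by blast
  then obtain U where U: "finite {s \<in> UNIV. U s \<noteq> topspace euclidean}"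
      "\<forall>s\<in>UNIV. openin euclidean (U s)" "trivial_char \<in> Pi\<^sub>E UNIV U" "Pi\<^sub>E UNIV U \<subseteq> W"
    using W(1) unfolding open_fun_def openin_product_topology_alt by blast
  have "finite {s. U s \<noteq> UNIV}"
    using U(1) by simp
  then obtain S where S: "finite S" "is_subgroup S" "{s. U s \<noteq> UNIV} \<subseteq> S"
    by (rule finite_subgroup_superset [OF tor])
  have "c \<in> V" if c: "c \<in> characters" "\<forall>s\<in>S. c s = 1" for c
  proof -
    have "c s \<in> U s" for s
    proof (cases "U s = UNIV")
      case False
      then have "c s = trivial_char s"
        using c(2) S(3) unfolding trivial_char_def by blast
      then show ?thesis
        using U(3) by auto
    qed simp
    then show ?thesis
      using U(4) W(2) c(1) by auto
  qed
  then show ?thesis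
    using S(1,2) by blast
qed

(* For the powers
   of \<phi> (and of inv \<phi>) it becomes top_pos_expansive (top_expansive) of dual_map \<phi>. *)
definition dual_family_expansive :: "('a::ab_group_add \<Rightarrow> 'a) set \<Rightarrow> bool" where
  "dual_family_expansive M \<longleftrightarrow>
     (\<exists>U. U \<subseteq> characters \<and> (\<exists>V. openin dual_top V \<and> trivial_char \<in> V \<and> V \<subseteq> U) \<and>
        {c \<in> characters. \<forall>f\<in>M. c \<circ> f \<in> U} = {trivial_char})"

lemma annihilator_trivial_if_dual_family_expansive:
  fixes M :: "('a::ab_group_add \<Rightarrow> 'a) set"
  assumes tor: "is_torsion_group TYPE('a)" and endo: "\<forall>f\<in>M. is_endo f"
    and "dual_family_expansive M"
  shows "\<exists>S. finite S \<and> is_subgroup S \<and>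
           (\<forall>c\<in>characters. (\<forall>f\<in>M. \<forall>s\<in>S. c (f s) = 1) \<longrightarrow> c = trivial_char)"
proof -
  obtain U V where V: "openin dual_top V" "trivial_char \<in> V" "V \<subseteq> U"
    and U: "{c \<in> characters. \<forall>f\<in>M. c \<circ> f \<in> U} = {trivial_char}"
    using assms(3) unfolding dual_family_expansive_def by blast
  obtain S where S: "finite S" "is_subgroup S"
    and annihilator: "\<forall>c\<in>characters. (\<forall>s\<in>S. c s = 1) \<longrightarrow> c \<in> V"
    using nbhd_contains_annihilator [OF tor V(1,2)] by blast
  have "c = trivial_char" if c: "c \<in> characters" "\<forall>f\<in>M. \<forall>s\<in>S. c (f s) = 1" for c
  proof -
    have "c \<circ> f \<in> U" if "f \<in> M" for f
      using annihilator [rule_format, OF char_comp_endo [OF c(1) bspec [OF endo that]]] c(2) V(3) that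
      by auto
    then show ?thesis
      using U c(1) by blast
  qed
  then show ?thesis
    using S by blast
qed

lemma dual_family_expansive_if_annihilator_trivial:
  fixes M :: "('a::ab_group_add \<Rightarrow> 'a) set"
  assumes S: "finite S" "is_subgroup S"
    and trivial: "\<forall>c\<in>characters. (\<forall>f\<in>M. \<forall>s\<in>S. c (f s) = 1) \<longrightarrow> c = trivial_char"
  shows "dual_family_expansive M"
proof -
  define U where "U = {c \<in> characters. \<forall>s\<in>S. 0 < Re (c s)}"
  have "trivial_char \<in> U"
    unfolding U_def using trivial_char_in_characters by (simp add: trivial_char_def)
  moreover have "c = trivial_char" if c: "c \<in> characters" "\<forall>f\<in>M. c \<circ> f \<in> U" for c
  proof (rule trivial [rule_format, OF c(1)])
    fix f s assume "f \<in> M" "s \<in> S"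
    then have "c \<circ> f \<in> characters" "\<forall>s\<in>S. 0 < Re ((c \<circ> f) s)"
      using c(2) unfolding U_def by auto
    then have "\<forall>s\<in>S. (c \<circ> f) s = 1"
      by (rule char_eq_1_if_Re_pos [OF _ S])
    then show "c (f s) = 1"
      using \<open>s \<in> S\<close> by simp
  qed
  moreover have "trivial_char \<circ> f = trivial_char" for f :: "'a \<Rightarrow> 'a"
    by (simp add: trivial_char_def comp_def)
  ultimately have "{c \<in> characters. \<forall>f\<in>M. c \<circ> f \<in> U} = {trivial_char}"
    using trivial_char_in_characters by auto
  moreover have "openin dual_top U"
    unfolding U_def using S(1) by (rule openin_dual_top_Re_pos)
  moreover have "U \<subseteq> characters"
    unfolding U_def by blast
  ultimately show "dual_family_expansive M"
    using \<open>trivial_char \<in> U\<close> unfolding dual_family_expansive_def by blast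
qed

lemma dual_family_expansive_iff_annihilator_trivial:
  fixes M :: "('a::ab_group_add \<Rightarrow> 'a) set"
  assumes tor: "is_torsion_group TYPE('a)" and endo: "\<forall>f\<in>M. is_endo f"
  shows "dual_family_expansive M \<longleftrightarrow>
         (\<exists>S. finite S \<and> is_subgroup S \<and>
            (\<forall>c\<in>characters. (\<forall>f\<in>M. \<forall>s\<in>S. c (f s) = 1) \<longrightarrow> c = trivial_char))"
proof
  show "\<exists>S. finite S \<and> is_subgroup S \<and>
      (\<forall>c\<in>characters. (\<forall>f\<in>M. \<forall>s\<in>S. c (f s) = 1) \<longrightarrow> c = trivial_char)"
    if "dual_family_expansive M"
    using that by (rule annihilator_trivial_if_dual_family_expansive [OF tor endo])
next
  assume "\<exists>S. finite S \<and> is_subgroup S \<and>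
      (\<forall>c\<in>characters. (\<forall>f\<in>M. \<forall>s\<in>S. c (f s) = 1) \<longrightarrow> c = trivial_char)"
  then obtain S where "finite S" "is_subgroup S"
    "\<forall>c\<in>characters. (\<forall>f\<in>M. \<forall>s\<in>S. c (f s) = 1) \<longrightarrow> c = trivial_char"
    by blast
  then show "dual_family_expansive M"
    by (rule dual_family_expansive_if_annihilator_trivial)
qed

lemma covers_finite_subgroups_iff_Union_eq_UNIV:
  fixes T :: "nat \<Rightarrow> 'a::ab_group_add set"
  assumes tor: "is_torsion_group TYPE('a)" and mono: "\<And>m n. m \<le> n \<Longrightarrow> T m \<subseteq> T n"
  shows "(\<forall>F. finite F \<and> is_subgroup F \<longrightarrow> (\<exists>n. F \<subseteq> T n)) \<longleftrightarrow> (\<Union>n. T n) = UNIV"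
proof
  assume covers: "\<forall>F. finite F \<and> is_subgroup F \<longrightarrow> (\<exists>n. F \<subseteq> T n)"
  have "UNIV = (\<Union>n. T n)"
  proof (rule UNIV_eq_I)
    fix g :: 'a
    have "finite {g}"
      by simp
    then obtain F where F: "finite F" "is_subgroup F" "{g} \<subseteq> F"
      by (rule finite_subgroup_superset [OF tor])
    then obtain n where "F \<subseteq> T n"
      using covers by auto
    then show "g \<in> (\<Union>n. T n)"
      using F(3) by blast
  qed
  then show "(\<Union>n. T n) = UNIV"
    by (rule sym)
next
  assume covers: "(\<Union>n. T n) = UNIV"
  have chain: "subset.chain UNIV (range T)"
    unfolding subset_chain_def
  proof (intro conjI ballI)
    fix X Y assume "X \<in> range T" "Y \<in> range T"
    then obtain i j where "X = T i" "Y = T j"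
      by blast
    then show "X \<subseteq> Y \<or> Y \<subseteq> X"
      using mono [of i j] mono [of j i] nat_le_linear [of i j] by auto
  qed simp
  show "\<forall>F. finite F \<and> is_subgroup F \<longrightarrow> (\<exists>n. F \<subseteq> T n)"
  proof (intro allI impI)
    fix F :: "'a set" assume "finite F \<and> is_subgroup F"
    then have "finite F"
      by simp
    moreover have "F \<subseteq> \<Union>(range T)"
      using covers by blast
    ultimately obtain B where "B \<in> range T" "F \<subseteq> B"
      by (rule finite_subset_Union_chain [OF _ _ _ chain]) simp
    then show "\<exists>n. F \<subseteq> T n"
      by blast
  qed
qed

lemma is_subgroup_UN_incseq:
  fixes T :: "nat \<Rightarrow> 'a::ab_group_add set"
  assumes "\<And>n. is_subgroup (T n)" and "\<And>m n. m \<le> n \<Longrightarrow> T m \<subseteq> T n"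
  shows "is_subgroup (\<Union>n. T n)"
  unfolding is_subgroup_def
proof (intro conjI ballI)
  show "0 \<in> (\<Union>n. T n)"
    using assms(1) unfolding is_subgroup_def by blast
  show "x + y \<in> (\<Union>n. T n)" if xy: "x \<in> (\<Union>n. T n)" "y \<in> (\<Union>n. T n)" for x y
  proof -
    obtain i j where "x \<in> T i" "y \<in> T j"
      using xy by blast
    then have "x \<in> T (max i j)" "y \<in> T (max i j)"
      using assms(2) [of i "max i j"] assms(2) [of j "max i j"] by auto
    then show ?thesis
      using assms(1) unfolding is_subgroup_def by blast
  qed
  show "- x \<in> (\<Union>n. T n)" if "x \<in> (\<Union>n. T n)" for x
    using that assms(1) unfolding is_subgroup_def by blast
qed

lemma expansiveness_duality:
  fixes T :: "'a::ab_group_add set \<Rightarrow> nat \<Rightarrow> 'a set" and M :: "('a \<Rightarrow> 'a) set"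
  assumes tor: "is_torsion_group TYPE('a)" and endo: "\<forall>f\<in>M. is_endo f"
    and subgroup: "\<And>S n. is_subgroup S \<Longrightarrow> is_subgroup (T S n)"
    and mono: "\<And>S m n. is_subgroup S \<Longrightarrow> m \<le> n \<Longrightarrow> T S m \<subseteq> T S n"
    and annihilator: "\<And>S c. is_subgroup S \<Longrightarrow> c \<in> characters \<Longrightarrow>
      (\<forall>n. \<forall>x\<in>T S n. c x = 1) \<longleftrightarrow> (\<forall>f\<in>M. \<forall>s\<in>S. c (f s) = 1)"
  shows "(\<exists>S. finite S \<and> is_subgroup S \<and> (\<forall>F. finite F \<and> is_subgroup F \<longrightarrow> (\<exists>n. F \<subseteq> T S n)))
     \<longleftrightarrow> dual_family_expansive M"
proof -
  have covers_iff: "(\<forall>F. finite F \<and> is_subgroup F \<longrightarrow> (\<exists>n. F \<subseteq> T S n)) \<longleftrightarrow>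
        (\<forall>c\<in>characters. (\<forall>f\<in>M. \<forall>s\<in>S. c (f s) = 1) \<longrightarrow> c = trivial_char)"
    if S: "is_subgroup S" for S
  proof -
    have "(\<forall>F. finite F \<and> is_subgroup F \<longrightarrow> (\<exists>n. F \<subseteq> T S n)) \<longleftrightarrow> (\<Union>n. T S n) = UNIV"
      using covers_finite_subgroups_iff_Union_eq_UNIV [OF tor mono [OF S]] .
    also have "\<dots> \<longleftrightarrow> (\<forall>c\<in>characters. (\<forall>x\<in>(\<Union>n. T S n). c x = 1) \<longrightarrow> c = trivial_char)"
      by (rule subgroup_eq_UNIV_iff_annihilator_trivial
          [OF tor is_subgroup_UN_incseq [OF subgroup [OF S] mono [OF S]]])
    also have "\<dots> \<longleftrightarrow> (\<forall>c\<in>characters. (\<forall>f\<in>M. \<forall>s\<in>S. c (f s) = 1) \<longrightarrow> c = trivial_char)"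
    proof (rule ball_cong [OF refl])
      fix c :: "'a \<Rightarrow> complex" assume "c \<in> characters"
      then show "((\<forall>x\<in>(\<Union>n. T S n). c x = 1) \<longrightarrow> c = trivial_char) \<longleftrightarrow>
          ((\<forall>f\<in>M. \<forall>s\<in>S. c (f s) = 1) \<longrightarrow> c = trivial_char)"
        using annihilator [OF S] by simp
    qed
    finally show ?thesis .
  qed
  have "(\<exists>S. finite S \<and> is_subgroup S \<and> (\<forall>F. finite F \<and> is_subgroup F \<longrightarrow> (\<exists>n. F \<subseteq> T S n)))
     \<longleftrightarrow> (\<exists>S. finite S \<and> is_subgroup S \<and>
          (\<forall>c\<in>characters. (\<forall>f\<in>M. \<forall>s\<in>S. c (f s) = 1) \<longrightarrow> c = trivial_char))"
    using covers_iff by (intro ex_cong1) auto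
  also have "\<dots> \<longleftrightarrow> dual_family_expansive M"
    by (rule dual_family_expansive_iff_annihilator_trivial [OF tor endo, symmetric])
  finally show ?thesis .
qed

section \<open>Trajectories\<close>

lemma endo_zero:
  assumes "is_endo f"
  shows "f 0 = 0"
  using assms [unfolded is_endo_def, rule_format, of 0 0] by simp

lemma endo_uminus:
  assumes "is_endo f"
  shows "f (- x) = - f x"
proof -
  have "f (- x) + f x = 0"
    using assms [unfolded is_endo_def, rule_format, of "- x" x] endo_zero [OF assms] by simp
  then show ?thesis
    by (simp add: eq_neg_iff_add_eq_0)
qed

lemma endo_funpow: "is_endo f \<Longrightarrow> is_endo (f ^^ k)"
  by (induction k) (auto simp: is_endo_def)

lemma endo_inv:
  assumes "is_endo f" "bij f"
  shows "is_endo (inv f)"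
  unfolding is_endo_def
proof (intro allI)
  fix x y
  have "f (inv f x + inv f y) = x + y"
    using assms by (simp add: is_endo_def bij_is_surj surj_f_inv_f)
  then show "inv f (x + y) = inv f x + inv f y"
    using inv_f_f [OF bij_is_inj [OF assms(2)], of "inv f x + inv f y"] by simp
qed

lemma is_subgroup_image:
  assumes f: "is_endo f" and S: "is_subgroup S"
  shows "is_subgroup (f ` S)"
  unfolding is_subgroup_def
proof (intro conjI ballI)
  have "0 \<in> S"
    using S unfolding is_subgroup_def by blast
  then show "0 \<in> f ` S"
    using endo_zero [OF f, symmetric] by (rule image_eqI [rotated])
  show "a + b \<in> f ` S" if ab: "a \<in> f ` S" "b \<in> f ` S" for a b
  proof -
    obtain x y where xy: "x \<in> S" "y \<in> S" and "a = f x" "b = f y"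
      using ab by blast
    then have "a + b = f (x + y)"
      using f unfolding is_endo_def by simp
    moreover have "x + y \<in> S"
      using S xy unfolding is_subgroup_def by blast
    ultimately show ?thesis
      by (rule image_eqI)
  qed
  show "- a \<in> f ` S" if a: "a \<in> f ` S" for a
  proof -
    obtain x where x: "x \<in> S" and "a = f x"
      using a by blast
    then have "- a = f (- x)"
      using endo_uminus [OF f] by simp
    moreover have "- x \<in> S"
      using S x unfolding is_subgroup_def by blast
    ultimately show ?thesis
      by (rule image_eqI)
  qed
qed

lemma pos_trajectory_0: "pos_trajectory \<phi> S 0 = S"
  unfolding pos_trajectory_def
proof (intro equalityI subsetI)
  fix s assume "s \<in> S"
  then show "s \<in> {\<Sum>k\<le>0. x k |x. \<forall>k\<le>0. x k \<in> (\<phi> ^^ k) ` S}"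
    by (intro CollectI exI [of _ "\<lambda>_. s"]) simp
qed auto

lemma pos_trajectory_Suc:
  "pos_trajectory \<phi> S (Suc n) = pos_trajectory \<phi> S n + (\<phi> ^^ Suc n) ` S"
proof (intro equalityI subsetI)
  fix a assume "a \<in> pos_trajectory \<phi> S (Suc n)"
  then obtain x where x: "a = (\<Sum>k\<le>Suc n. x k)" "\<forall>k\<le>Suc n. x k \<in> (\<phi> ^^ k) ` S"
    unfolding pos_trajectory_def by blast
  then have "(\<Sum>k\<le>n. x k) \<in> pos_trajectory \<phi> S n"
    unfolding pos_trajectory_def by auto
  moreover have "x (Suc n) \<in> (\<phi> ^^ Suc n) ` S"
    using x(2) by blast
  ultimately show "a \<in> pos_trajectory \<phi> S n + (\<phi> ^^ Suc n) ` S"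
    unfolding x(1) sum.atMost_Suc by (rule set_plus_intro)
next
  fix a assume "a \<in> pos_trajectory \<phi> S n + (\<phi> ^^ Suc n) ` S"
  then obtain x y where x: "\<forall>k\<le>n. x k \<in> (\<phi> ^^ k) ` S" and y: "y \<in> (\<phi> ^^ Suc n) ` S"
    and a: "a = (\<Sum>k\<le>n. x k) + y"
    unfolding pos_trajectory_def by (auto elim!: set_plus_elim)
  have "a = (\<Sum>k\<le>Suc n. (x (Suc n := y)) k)"
    using a by simp
  moreover have "\<forall>k\<le>Suc n. (x (Suc n := y)) k \<in> (\<phi> ^^ k) ` S"
    using x y by (simp add: le_Suc_eq)
  ultimately show "a \<in> pos_trajectory \<phi> S (Suc n)"
    unfolding pos_trajectory_def by blast
qed

lemma is_subgroup_pos_trajectory: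
  assumes "is_endo \<phi>" "is_subgroup S"
  shows "is_subgroup (pos_trajectory \<phi> S n)"
proof (induction n)
  case 0
  show ?case
    using assms(2) by (simp add: pos_trajectory_0)
next
  case (Suc n)
  then show ?case
    unfolding pos_trajectory_Suc
    by (rule is_subgroup_set_plus [OF _ is_subgroup_image [OF endo_funpow [OF assms(1)] assms(2)]])
qed

lemma zero_mem_pos_trajectory:
  assumes "is_endo \<phi>" "is_subgroup S"
  shows "0 \<in> pos_trajectory \<phi> S n"
  using is_subgroup_pos_trajectory [OF assms] unfolding is_subgroup_def by blast

lemma pos_trajectory_mono:
  assumes "is_endo \<phi>" "is_subgroup S" "m \<le> n"
  shows "pos_trajectory \<phi> S m \<subseteq> pos_trajectory \<phi> S n"
proof -
  have "0 \<in> (\<phi> ^^ k) ` S" for k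
    using is_subgroup_image [OF endo_funpow [OF assms(1)] assms(2)] unfolding is_subgroup_def by blast
  then have "pos_trajectory \<phi> S k \<subseteq> pos_trajectory \<phi> S (Suc k)" for k
    unfolding pos_trajectory_Suc by (subst add.commute) (rule set_zero_plus2)
  then show ?thesis
    using assms(3) by (rule lift_Suc_mono_le)
qed

lemma funpow_image_subset_pos_trajectory:
  assumes "is_endo \<phi>" "is_subgroup S"
  shows "(\<phi> ^^ k) ` S \<subseteq> pos_trajectory \<phi> S k"
proof (cases k)
  case (Suc n)
  show ?thesis
    unfolding Suc pos_trajectory_Suc by (rule set_zero_plus2 [OF zero_mem_pos_trajectory [OF assms]])
qed (simp add: pos_trajectory_0)

lemma char_trivial_on_pos_trajectories_iff:
  assumes c: "c \<in> characters" and "is_endo \<phi>" "is_subgroup S"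
  shows "(\<forall>n. \<forall>x\<in>pos_trajectory \<phi> S n. c x = 1) \<longleftrightarrow> (\<forall>k. \<forall>s\<in>S. c ((\<phi> ^^ k) s) = 1)"
proof
  show "\<forall>k. \<forall>s\<in>S. c ((\<phi> ^^ k) s) = 1" if "\<forall>n. \<forall>x\<in>pos_trajectory \<phi> S n. c x = 1"
    using that funpow_image_subset_pos_trajectory [OF assms(2,3)] by blast
next
  assume trivial: "\<forall>k. \<forall>s\<in>S. c ((\<phi> ^^ k) s) = 1"
  show "\<forall>n. \<forall>x\<in>pos_trajectory \<phi> S n. c x = 1"
  proof
    fix n show "\<forall>x\<in>pos_trajectory \<phi> S n. c x = 1"
    proof (induction n)
      case 0
      show ?case
        using spec [OF trivial, of 0] by (simp add: pos_trajectory_0)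
    next
      case (Suc n)
      show ?case
      proof
        fix x assume "x \<in> pos_trajectory \<phi> S (Suc n)"
        then obtain a b where "x = a + b" "a \<in> pos_trajectory \<phi> S n" "b \<in> (\<phi> ^^ Suc n) ` S"
          unfolding pos_trajectory_Suc by (rule set_plus_elim)
        moreover from this(3) have "c b = 1"
          using trivial by blast
        ultimately show "c x = 1"
          using Suc.IH by (simp add: char_add [OF c])
      qed
    qed
  qed
qed

lemma full_trajectory_eq_set_plus:
  "full_trajectory \<phi> S n = pos_trajectory \<phi> S n + pos_trajectory (inv \<phi>) S n"
  unfolding full_trajectory_def pos_trajectory_def set_plus_def by blast

lemma char_trivial_on_set_plus_iff:
  assumes "c \<in> characters" "0 \<in> A" "0 \<in> B"
  shows "(\<forall>x\<in>A + B. c x = 1) \<longleftrightarrow> (\<forall>x\<in>A. c x = 1) \<and> (\<forall>x\<in>B. c x = 1)"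
  using assms set_plus_intro [of _ A 0 B] set_plus_intro [of 0 A _ B]
  by (auto simp: char_add elim!: set_plus_elim)

lemma char_trivial_on_full_trajectories_iff:
  assumes c: "c \<in> characters" and endo: "is_endo \<phi>" and inv_endo: "is_endo (inv \<phi>)"
    and S: "is_subgroup S"
  shows "(\<forall>n. \<forall>x\<in>full_trajectory \<phi> S n. c x = 1) \<longleftrightarrow>
    (\<forall>f\<in>range (\<lambda>k. \<phi> ^^ k) \<union> range (\<lambda>k. inv \<phi> ^^ k). \<forall>s\<in>S. c (f s) = 1)"
proof -
  have "(\<forall>n. \<forall>x\<in>full_trajectory \<phi> S n. c x = 1) \<longleftrightarrow>
      (\<forall>n. \<forall>x\<in>pos_trajectory \<phi> S n. c x = 1) \<and> (\<forall>n. \<forall>x\<in>pos_trajectory (inv \<phi>) S n. c x = 1)"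
    unfolding full_trajectory_eq_set_plus
    using zero_mem_pos_trajectory [OF endo S] zero_mem_pos_trajectory [OF inv_endo S]
    by (simp add: char_trivial_on_set_plus_iff [OF c] all_conj_distrib)
  also have "\<dots> \<longleftrightarrow> (\<forall>k. \<forall>s\<in>S. c ((\<phi> ^^ k) s) = 1) \<and> (\<forall>k. \<forall>s\<in>S. c ((inv \<phi> ^^ k) s) = 1)"
    by (simp only: char_trivial_on_pos_trajectories_iff [OF c endo S]
        char_trivial_on_pos_trajectories_iff [OF c inv_endo S])
  also have "\<dots> \<longleftrightarrow> (\<forall>f\<in>range (\<lambda>k. \<phi> ^^ k) \<union> range (\<lambda>k. inv \<phi> ^^ k). \<forall>s\<in>S. c (f s) = 1)"
    by auto
  finally show ?thesis .
qed

lemma dual_map_funpow: "(dual_map \<phi> ^^ k) c = c \<circ> (\<phi> ^^ k)"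
  by (induction k) (auto simp: dual_map_def funpow_swap1)

lemma inv_into_dual_map:
  assumes "is_endo \<phi>" "bij \<phi>" "c \<in> characters"
  shows "inv_into characters (dual_map \<phi>) c = c \<circ> inv \<phi>"
proof (rule inv_into_f_eq)
  show "inj_on (dual_map \<phi>) characters"
  proof (rule inj_onI)
    fix x y assume "dual_map \<phi> x = dual_map \<phi> y"
    then have "x \<circ> \<phi> \<circ> inv \<phi> = y \<circ> \<phi> \<circ> inv \<phi>"
      unfolding dual_map_def by simp
    then show "x = y"
      using assms(2) by (simp add: o_assoc [symmetric] bij_is_surj surj_iff [THEN iffD1])
  qed
  show "c \<circ> inv \<phi> \<in> characters"
    using char_comp_endo [OF assms(3) endo_inv [OF assms(1,2)]] .
  show "dual_map \<phi> (c \<circ> inv \<phi>) = c"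
    using assms(2) unfolding dual_map_def by (simp add: o_assoc bij_is_inj inv_o_cancel)
qed

lemma inv_into_dual_map_funpow:
  assumes "is_endo \<phi>" "bij \<phi>" "c \<in> characters"
  shows "(inv_into characters (dual_map \<phi>) ^^ k) c = c \<circ> (inv \<phi> ^^ k)"
proof (induction k)
  case (Suc k)
  let ?\<psi> = "inv_into characters (dual_map \<phi>)"
  have "(?\<psi> ^^ Suc k) c = ?\<psi> ((?\<psi> ^^ k) c)"
    by simp
  also have "\<dots> = ?\<psi> (c \<circ> (inv \<phi> ^^ k))"
    by (simp only: Suc.IH)
  also have "\<dots> = c \<circ> (inv \<phi> ^^ k) \<circ> inv \<phi>"
    using inv_into_dual_map [OF assms(1,2)] char_comp_endo [OF assms(3) endo_funpow [OF endo_inv [OF assms(1,2)]]] .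
  also have "\<dots> = c \<circ> (inv \<phi> ^^ Suc k)"
    by (simp only: funpow_Suc_right o_assoc)
  finally show ?case .
qed simp

lemma alg_pos_expansive_iff_dual:
  fixes \<phi> :: "'a::ab_group_add \<Rightarrow> 'a"
  assumes tor: "is_torsion_group TYPE('a)" and endo: "is_endo \<phi>"
  shows "alg_pos_expansive \<phi> \<longleftrightarrow> top_pos_expansive dual_top trivial_char (dual_map \<phi>)"
proof -
  have "alg_pos_expansive \<phi> \<longleftrightarrow> dual_family_expansive (range (\<lambda>k. \<phi> ^^ k))"
    unfolding alg_pos_expansive_def
  proof (rule expansiveness_duality [OF tor])
    show "\<forall>f\<in>range (\<lambda>k. \<phi> ^^ k). is_endo f"
      using endo_funpow [OF endo] by blast
    show "\<And>S n. is_subgroup S \<Longrightarrow> is_subgroup (pos_trajectory \<phi> S n)"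
      by (rule is_subgroup_pos_trajectory [OF endo])
    show "\<And>S m n. is_subgroup S \<Longrightarrow> m \<le> n \<Longrightarrow> pos_trajectory \<phi> S m \<subseteq> pos_trajectory \<phi> S n"
      by (rule pos_trajectory_mono [OF endo])
    show "\<And>S c. is_subgroup S \<Longrightarrow> c \<in> characters \<Longrightarrow>
        (\<forall>n. \<forall>x\<in>pos_trajectory \<phi> S n. c x = 1) \<longleftrightarrow> (\<forall>f\<in>range (\<lambda>k. \<phi> ^^ k). \<forall>s\<in>S. c (f s) = 1)"
      using char_trivial_on_pos_trajectories_iff [OF _ endo] by simp
  qed
  also have "\<dots> \<longleftrightarrow> top_pos_expansive dual_top trivial_char (dual_map \<phi>)"
    unfolding dual_family_expansive_def top_pos_expansive_def topspace_dual_top dual_map_funpow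
    by simp
  finally show ?thesis .
qed

lemma alg_expansive_iff_dual:
  fixes \<phi> :: "'a::ab_group_add \<Rightarrow> 'a"
  assumes tor: "is_torsion_group TYPE('a)" and endo: "is_endo \<phi>" and "bij \<phi>"
  shows "alg_expansive \<phi> \<longleftrightarrow> top_expansive dual_top trivial_char (dual_map \<phi>)"
proof -
  let ?M = "range (\<lambda>k. \<phi> ^^ k) \<union> range (\<lambda>k. inv \<phi> ^^ k)"
  have inv_endo: "is_endo (inv \<phi>)"
    using endo_inv [OF endo \<open>bij \<phi>\<close>] .
  have "alg_expansive \<phi> \<longleftrightarrow> dual_family_expansive ?M"
    unfolding alg_expansive_def
  proof (rule expansiveness_duality [OF tor])
    show "\<forall>f\<in>?M. is_endo f"
      using endo_funpow [OF endo] endo_funpow [OF inv_endo] by blast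
    show "\<And>S n. is_subgroup S \<Longrightarrow> is_subgroup (full_trajectory \<phi> S n)"
      unfolding full_trajectory_eq_set_plus
      by (intro is_subgroup_set_plus is_subgroup_pos_trajectory endo inv_endo)
    show "\<And>S m n. is_subgroup S \<Longrightarrow> m \<le> n \<Longrightarrow> full_trajectory \<phi> S m \<subseteq> full_trajectory \<phi> S n"
      unfolding full_trajectory_eq_set_plus
      by (intro set_plus_mono2 pos_trajectory_mono endo inv_endo)
    show "\<And>S c. is_subgroup S \<Longrightarrow> c \<in> characters \<Longrightarrow>
        (\<forall>n. \<forall>x\<in>full_trajectory \<phi> S n. c x = 1) \<longleftrightarrow> (\<forall>f\<in>?M. \<forall>s\<in>S. c (f s) = 1)"
      by (rule char_trivial_on_full_trajectories_iff [OF _ endo inv_endo])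
  qed
  also have "\<dots> \<longleftrightarrow> top_expansive dual_top trivial_char (dual_map \<phi>)"
  proof -
    have "(\<forall>f\<in>?M. c \<circ> f \<in> U) \<longleftrightarrow>
        (\<forall>k. (dual_map \<phi> ^^ k) c \<in> U \<and> (inv_into characters (dual_map \<phi>) ^^ k) c \<in> U)"
      if "c \<in> characters" for c U
      using inv_into_dual_map_funpow [OF endo \<open>bij \<phi>\<close> that] by (auto simp: dual_map_funpow)
    then have "{c \<in> characters. \<forall>f\<in>?M. c \<circ> f \<in> U} =
        {c \<in> characters. \<forall>k. (dual_map \<phi> ^^ k) c \<in> U \<and> (inv_into characters (dual_map \<phi>) ^^ k) c \<in> U}"
      for U
      by blast
    then show ?thesis
      by (simp only: dual_family_expansive_def top_expansive_def topspace_dual_top)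
  qed
  finally show ?thesis .
qed

theorem theorem5p1:
  fixes \<phi> :: "'a::ab_group_add \<Rightarrow> 'a"
  assumes "is_torsion_group TYPE('a)"
    and "is_endo \<phi>"
  shows "(alg_pos_expansive \<phi> \<longleftrightarrow>
            top_pos_expansive dual_top trivial_char (dual_map \<phi>))
       \<and> (bij \<phi> \<longrightarrow>
            (alg_expansive \<phi> \<longleftrightarrow> top_expansive dual_top trivial_char (dual_map \<phi>)))"
  using alg_pos_expansive_iff_dual [OF assms] alg_expansive_iff_dual [OF assms] by blast

end
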